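(* Let $G$ be a graph on $[n]$ and let $e$ and $f$ be two crossing edges of $G$. Then $e$ and $f$ are crossing closed if and only if the join $e\vee f$ exists in $NC_G$. When $e$ and $f$ are crossing closed, $e\vee f$ is the bond whose edge set is $E(J(e,f))$, and $J(e,f)$ is the unique non-trivial connected component of $e\vee f$. Furthermore, $G$ is crossing closed if and only if $e\vee f$ exists in $NC_G$ for every pair of crossing edges $e,f$ of $G$.
   Context: All graphs are finite simple graphs with vertex set $[n]=\{1,\dots,n\}$; edges are written $ij$ with $i<j$. Two edges $a_1a_2$ and $b_1b_2$ cross if $a_1<b_1<a_2<b_2$ or $b_1<a_1<b_2<a_2$. A spanning subgraph is identified with its edge set. A bond of $G$ is a spanning subgraph of $G$ each of whose connected components is an induced subgraph of $G$. For a bond $H$, $\pi(H)$ is the set partition of $[n]$ whose blocks are the vertex sets of the connected components of $H$. A set partition is crossing if there are distinct blocks $B,B'$ and $a,c\in B$, $b,d\in B'$ with $a<b<c<d$, and noncrossing otherwise; a bond $H$ is noncrossing if $\pi(H)$ is noncrossing. $NC_G$ is the poset of noncrossing bonds of $G$ ordered by inclusion of edge sets. For an edge $e$, $e$ also denotes the bond with edge set $\{e\}$ (an element of $NC_G$). Two crossing edges $e,f$ are crossing closed if among all induced connected subgraphs of $G$ containing both $e$ and $f$ there is a unique one minimal with respect to containment, denoted $J(e,f)$; $G$ is crossing closed if every pair of crossing edges of $G$ is crossing closed. *)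

theory Defs
  imports Main
begin

definition graph_on :: "nat \<Rightarrow> (nat \<times> nat) set \<Rightarrow> bool" where
  "graph_on n E \<longleftrightarrow> E \<subseteq> {(i,j). 1 \<le> i \<and> i < j \<and> j \<le> n}"

definition crosses :: "nat \<times> nat \<Rightarrow> nat \<times> nat \<Rightarrow> bool" where
  "crosses e f \<longleftrightarrow> (case e of (a1,a2) \<Rightarrow> case f of (b1,b2) \<Rightarrow>
      (a1 < b1 \<and> b1 < a2 \<and> a2 < b2) \<or> (b1 < a1 \<and> a1 < b2 \<and> b2 < a2))"

definition adj :: "(nat \<times> nat) set \<Rightarrow> (nat \<times> nat) set" where
  "adj H = H \<union> H\<inverse>"

definition comp :: "nat \<Rightarrow> (nat \<times> nat) set \<Rightarrow> nat \<Rightarrow> nat set" where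
  "comp n H v = {u \<in> {1..n}. (v,u) \<in> (adj H)\<^sup>*}"

definition pi_part :: "nat \<Rightarrow> (nat \<times> nat) set \<Rightarrow> nat set set" where
  "pi_part n H = comp n H ` {1..n}"

definition induced_edges :: "(nat \<times> nat) set \<Rightarrow> nat set \<Rightarrow> (nat \<times> nat) set" where
  "induced_edges E S = {(i,j) \<in> E. i \<in> S \<and> j \<in> S}"

definition is_bond :: "nat \<Rightarrow> (nat \<times> nat) set \<Rightarrow> (nat \<times> nat) set \<Rightarrow> bool" where
  "is_bond n E H \<longleftrightarrow> H \<subseteq> E \<and>
     (\<forall>C \<in> pi_part n H. {(i,j) \<in> H. i \<in> C \<and> j \<in> C} = induced_edges E C)"

definition noncrossing_partition :: "nat set set \<Rightarrow> bool" where
  "noncrossing_partition P \<longleftrightarrow> \<not> (\<exists>B \<in> P. \<exists>B' \<in> P. B \<noteq> B' \<and>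
     (\<exists>a c b d. a \<in> B \<and> c \<in> B \<and> b \<in> B' \<and> d \<in> B' \<and> a < b \<and> b < c \<and> c < d))"

text \<open>NC_G: the noncrossing bonds (as edge sets), ordered by inclusion.\<close>
definition NC :: "nat \<Rightarrow> (nat \<times> nat) set \<Rightarrow> (nat \<times> nat) set set" where
  "NC n E = {H. is_bond n E H \<and> noncrossing_partition (pi_part n H)}"

definition is_join :: "'a set set \<Rightarrow> 'a set \<Rightarrow> 'a set \<Rightarrow> 'a set \<Rightarrow> bool" where
  "is_join S x y z \<longleftrightarrow> z \<in> S \<and> x \<subseteq> z \<and> y \<subseteq> z \<and>
     (\<forall>w \<in> S. x \<subseteq> w \<and> y \<subseteq> w \<longrightarrow> z \<subseteq> w)"

definition induced_connected :: "nat \<Rightarrow> (nat \<times> nat) set \<Rightarrow> nat set \<Rightarrow> bool" where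
  "induced_connected n E S \<longleftrightarrow> S \<subseteq> {1..n} \<and> S \<noteq> {} \<and>
     (\<forall>u \<in> S. \<forall>v \<in> S. (u,v) \<in> (adj (induced_edges E S))\<^sup>*)"

text \<open>Induced connected subgraphs containing both edges e and f (identified with vertex sets).\<close>
definition icc :: "nat \<Rightarrow> (nat \<times> nat) set \<Rightarrow> nat \<times> nat \<Rightarrow> nat \<times> nat \<Rightarrow> nat set set" where
  "icc n E e f = {S. induced_connected n E S \<and>
      fst e \<in> S \<and> snd e \<in> S \<and> fst f \<in> S \<and> snd f \<in> S}"

definition minimal_icc :: "nat \<Rightarrow> (nat \<times> nat) set \<Rightarrow> nat \<times> nat \<Rightarrow> nat \<times> nat \<Rightarrow> nat set \<Rightarrow> bool" where
  "minimal_icc n E e f S \<longleftrightarrow> S \<in> icc n E e f \<and> (\<forall>T \<in> icc n E e f. T \<subseteq> S \<longrightarrow> T = S)"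

definition crossing_closed_pair :: "nat \<Rightarrow> (nat \<times> nat) set \<Rightarrow> nat \<times> nat \<Rightarrow> nat \<times> nat \<Rightarrow> bool" where
  "crossing_closed_pair n E e f \<longleftrightarrow> (\<exists>!S. minimal_icc n E e f S)"

text \<open>J(e,f), as a vertex set; its edge set is induced_edges E (J n E e f).\<close>
definition J :: "nat \<Rightarrow> (nat \<times> nat) set \<Rightarrow> nat \<times> nat \<Rightarrow> nat \<times> nat \<Rightarrow> nat set" where
  "J n E e f = (THE S. minimal_icc n E e f S)"

definition crossing_closed_graph :: "nat \<Rightarrow> (nat \<times> nat) set \<Rightarrow> bool" where
  "crossing_closed_graph n E \<longleftrightarrow>
     (\<forall>e \<in> E. \<forall>f \<in> E. crosses e f \<longrightarrow> crossing_closed_pair n E e f)"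

end

theory Submission
  imports Defs
begin

text \<open>
  If the noncrossing bond H contains the crossing edges e and f, then e and f lie in one block C
  of H; C is connected and induced, so it belongs to the family of induced connected sets
  containing e and f, and G[C] \<subseteq> H. Conversely, G[S] is a noncrossing bond for every induced
  connected S. Hence the upper bounds of e and f in NC_G are, up to inclusion, exactly the G[S]
  for such S, and a least one exists iff the minimal such S is unique; since a connected set
  with at least two vertices is determined by its induced edges, G[S] \<subseteq> G[T] means S \<subseteq> T.
\<close>

lemma graph_onD:
  "graph_on n E \<Longrightarrow> (i,j) \<in> E \<Longrightarrow> i \<in> {1..n} \<and> j \<in> {1..n} \<and> i < j"
  unfolding graph_on_def by auto

lemma adj_rtrancl_sym: "(x,y) \<in> (adj H)\<^sup>* \<Longrightarrow> (y,x) \<in> (adj H)\<^sup>*"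
  by (metis adj_def converse_Un converse_converse rtrancl_converseI sup_commute)

lemma noncrossing_partitionD:
  assumes "noncrossing_partition P" "B \<in> P" "B' \<in> P"
    and "a \<in> B" "c \<in> B" "b \<in> B'" "d \<in> B'" "a < b" "b < c" "c < d"
  shows "B = B'"
  using assms unfolding noncrossing_partition_def by meson

lemma rtrancl_adj_induced_edges:
  "(v,u) \<in> (adj (induced_edges E S))\<^sup>* \<Longrightarrow> u = v \<or> v \<in> S \<and> u \<in> S"
  by (induction rule: rtrancl_induct) (auto simp: adj_def induced_edges_def)

lemma comp_induced_edges:
  assumes "induced_connected n E S" "v \<in> {1..n}"
  shows "comp n (induced_edges E S) v = (if v \<in> S then S else {v})"
  using assms rtrancl_adj_induced_edges[of v _ E S]
  unfolding comp_def induced_connected_def by auto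

lemma pi_part_induced_edges:
  assumes "induced_connected n E S"
  shows "pi_part n (induced_edges E S) = insert S ((\<lambda>v. {v}) ` ({1..n} - S))"
proof -
  define block where "block v = (if v \<in> S then S else {v})" for v
  obtain s where s: "s \<in> S" and sub: "S \<subseteq> {1..n}"
    using assms unfolding induced_connected_def by auto
  have "pi_part n (induced_edges E S) = block ` (S \<union> ({1..n} - S))"
    unfolding pi_part_def block_def using comp_induced_edges[OF assms] sub
    by (simp add: Un_absorb1)
  also have "\<dots> = block ` S \<union> block ` ({1..n} - S)"
    by (rule image_Un)
  also have "block ` S = {S}"
    using s by (auto simp: block_def)
  also have "block ` ({1..n} - S) = (\<lambda>v. {v}) ` ({1..n} - S)"
    by (rule image_cong) (auto simp: block_def)
  finally show ?thesis by simp
qed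

lemma induced_edges_in_NC:
  assumes g: "graph_on n E" and S: "induced_connected n E S"
  shows "induced_edges E S \<in> NC n E"
proof -
  have no_loops: "(v,v) \<notin> E" for v
    using graph_onD[OF g] by blast
  have "is_bond n E (induced_edges E S)"
    unfolding is_bond_def pi_part_induced_edges[OF S]
    by (auto simp: no_loops induced_edges_def)
  moreover have "noncrossing_partition (pi_part n (induced_edges E S))"
    unfolding noncrossing_partition_def pi_part_induced_edges[OF S] by auto
  ultimately show ?thesis by (simp add: NC_def)
qed

lemma nontrivial_blocks_induced_edges:
  assumes S: "induced_connected n E S" and "2 \<le> card S"
  shows "{C \<in> pi_part n (induced_edges E S). 2 \<le> card C} = {S}"
  using assms(2) unfolding pi_part_induced_edges[OF S] by auto

lemma subset_if_induced_edges_subset: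
  assumes S: "induced_connected n E S" and "x \<in> S" "y \<in> S" "x \<noteq> y"
    and sub: "induced_edges E S \<subseteq> induced_edges E T"
  shows "S \<subseteq> T"
proof
  fix v assume v: "v \<in> S"
  obtain w where w: "w \<in> S" "w \<noteq> v" using assms(2-4) by blast
  have "(v,w) \<in> (adj (induced_edges E S))\<^sup>*" using S v w unfolding induced_connected_def by blast
  then obtain u where "(v,u) \<in> adj (induced_edges E S)" using w(2) by (metis converse_rtranclE)
  then show "v \<in> T" using sub unfolding adj_def induced_edges_def by auto
qed

lemma rtrancl_adj_within_comp:
  assumes g: "graph_on n E" and HE: "H \<subseteq> E" and v: "v \<in> {1..n}"
    and "(v,u) \<in> (adj H)\<^sup>*"
  shows "(v,u) \<in> (adj {(i,j) \<in> H. i \<in> comp n H v \<and> j \<in> comp n H v})\<^sup>*"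
  using assms(4)
proof (induction rule: rtrancl_induct)
  case base
  then show ?case by simp
next
  case (step y z)
  have "y \<in> {1..n}" "z \<in> {1..n}"
    using step.hyps(2) HE graph_onD[OF g] unfolding adj_def by auto
  moreover have "(v,z) \<in> (adj H)\<^sup>*" using step.hyps by simp
  ultimately have "y \<in> comp n H v" "z \<in> comp n H v"
    using step.hyps(1) unfolding comp_def by auto
  then have "(y,z) \<in> adj {(i,j) \<in> H. i \<in> comp n H v \<and> j \<in> comp n H v}"
    using step.hyps(2) unfolding adj_def by auto
  with step.IH show ?case by (rule rtrancl_into_rtrancl)
qed

lemma bond_comp_induced_connected:
  assumes g: "graph_on n E" and H: "is_bond n E H" and v: "v \<in> {1..n}"
  shows "induced_connected n E (comp n H v)" and "induced_edges E (comp n H v) \<subseteq> H"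
proof -
  let ?C = "comp n H v"
  have HE: "H \<subseteq> E" using H by (simp add: is_bond_def)
  have block: "{(i,j) \<in> H. i \<in> ?C \<and> j \<in> ?C} = induced_edges E ?C"
    using H v unfolding is_bond_def pi_part_def by blast
  then show "induced_edges E ?C \<subseteq> H" by (subst block[symmetric]) auto
  have from_v: "(v,u) \<in> (adj (induced_edges E ?C))\<^sup>*" if "u \<in> ?C" for u
    using rtrancl_adj_within_comp[OF g HE v] that block unfolding comp_def by auto
  have "(u,w) \<in> (adj (induced_edges E ?C))\<^sup>*" if "u \<in> ?C" "w \<in> ?C" for u w
    using adj_rtrancl_sym[OF from_v[OF that(1)]] from_v[OF that(2)] by (rule rtrancl_trans)
  moreover have "v \<in> ?C" using v unfolding comp_def by simp
  ultimately show "induced_connected n E ?C"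
    unfolding induced_connected_def comp_def by blast
qed

lemma comp_contains_edge:
  assumes "graph_on n E" "H \<subseteq> E" "(a,b) \<in> H"
  shows "a \<in> comp n H a" "b \<in> comp n H a" "comp n H a \<in> pi_part n H"
  using assms graph_onD[of n E a b] unfolding comp_def pi_part_def adj_def by auto

lemma NC_upper_bound_contains_icc:
  assumes g: "graph_on n E" and H: "H \<in> NC n E" and "e \<in> H" "f \<in> H" and cr: "crosses e f"
  obtains C where "C \<in> icc n E e f" "induced_edges E C \<subseteq> H"
proof -
  obtain a1 a2 b1 b2 where e: "e = (a1,a2)" and f: "f = (b1,b2)" by fastforce
  have bond: "is_bond n E H" and nc: "noncrossing_partition (pi_part n H)"
    using H by (auto simp: NC_def)
  have HE: "H \<subseteq> E" using bond by (simp add: is_bond_def)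
  note Ce = comp_contains_edge[OF g HE \<open>e \<in> H\<close>[unfolded e]]
  note Cf = comp_contains_edge[OF g HE \<open>f \<in> H\<close>[unfolded f]]
  have "a1 < b1 \<and> b1 < a2 \<and> a2 < b2 \<or> b1 < a1 \<and> a1 < b2 \<and> b2 < a2"
    using cr unfolding e f crosses_def by simp
  then have same: "comp n H a1 = comp n H b1"
  proof (elim disjE conjE)
    assume "a1 < b1" "b1 < a2" "a2 < b2"
    then show ?thesis using noncrossing_partitionD[OF nc Ce(3) Cf(3)] Ce Cf by blast
  next
    assume "b1 < a1" "a1 < b2" "b2 < a2"
    then show ?thesis using noncrossing_partitionD[OF nc Cf(3) Ce(3)] Ce Cf by metis
  qed
  have "a1 \<in> {1..n}" using g HE \<open>e \<in> H\<close> e graph_onD by blast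
  note C = bond_comp_induced_connected[OF g bond this]
  have "comp n H a1 \<in> icc n E e f"
    using C(1) Ce Cf same unfolding icc_def e f by auto
  then show ?thesis using C(2) by (rule that)
qed

lemma icc_has_minimal_subset:
  assumes "T \<in> icc n E e f"
  shows "\<exists>S. minimal_icc n E e f S \<and> S \<subseteq> T"
proof -
  have "icc n E e f \<subseteq> Pow {1..n}"
    unfolding icc_def induced_connected_def by blast
  then have "finite (icc n E e f)" by (rule finite_subset) simp
  from finite_has_minimal2[OF this assms] show ?thesis
    unfolding minimal_icc_def by blast
qed

lemma minimal_icc_J:
  "crossing_closed_pair n E e f \<Longrightarrow> minimal_icc n E e f (J n E e f)"
  unfolding crossing_closed_pair_def J_def by (rule theI')

lemma minimal_icc_eq_J:
  "crossing_closed_pair n E e f \<Longrightarrow> minimal_icc n E e f S \<Longrightarrow> S = J n E e f"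
  unfolding crossing_closed_pair_def J_def by (rule the1_equality[symmetric])

lemma edges_in_induced_edges_icc:
  "e \<in> E \<Longrightarrow> f \<in> E \<Longrightarrow> S \<in> icc n E e f \<Longrightarrow> e \<in> induced_edges E S \<and> f \<in> induced_edges E S"
  unfolding icc_def induced_edges_def by auto

lemma induced_edges_mono: "S \<subseteq> T \<Longrightarrow> induced_edges E S \<subseteq> induced_edges E T"
  unfolding induced_edges_def by auto

lemma join_induced_edges_J:
  assumes g: "graph_on n E" and "e \<in> E" "f \<in> E" and cr: "crosses e f"
    and cc: "crossing_closed_pair n E e f"
  shows "is_join (NC n E) {e} {f} (induced_edges E (J n E e f))"
  unfolding is_join_def
proof (intro conjI ballI impI)
  have J: "J n E e f \<in> icc n E e f"
    using minimal_icc_J[OF cc] unfolding minimal_icc_def by blast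
  then show "induced_edges E (J n E e f) \<in> NC n E"
    using induced_edges_in_NC[OF g] unfolding icc_def by blast
  show "{e} \<subseteq> induced_edges E (J n E e f)" "{f} \<subseteq> induced_edges E (J n E e f)"
    using edges_in_induced_edges_icc[OF \<open>e \<in> E\<close> \<open>f \<in> E\<close> J] by auto
  fix w assume "w \<in> NC n E" "{e} \<subseteq> w \<and> {f} \<subseteq> w"
  then obtain C where C: "C \<in> icc n E e f" "induced_edges E C \<subseteq> w"
    using NC_upper_bound_contains_icc[OF g _ _ _ cr] by blast
  obtain S where "minimal_icc n E e f S" "S \<subseteq> C"
    using icc_has_minimal_subset[OF C(1)] by blast
  then have "J n E e f \<subseteq> C" using minimal_icc_eq_J[OF cc] by blast
  then show "induced_edges E (J n E e f) \<subseteq> w"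
    using induced_edges_mono C(2) by blast
qed

lemma crossing_closed_pair_if_join:
  assumes g: "graph_on n E" and "e \<in> E" "f \<in> E" and cr: "crosses e f"
    and join: "is_join (NC n E) {e} {f} z"
  shows "crossing_closed_pair n E e f"
proof -
  have z: "z \<in> NC n E" "e \<in> z" "f \<in> z"
    and least: "\<And>w. w \<in> NC n E \<Longrightarrow> e \<in> w \<Longrightarrow> f \<in> w \<Longrightarrow> z \<subseteq> w"
    using join unfolding is_join_def by auto
  obtain C where C: "C \<in> icc n E e f" "induced_edges E C \<subseteq> z"
    using NC_upper_bound_contains_icc[OF g z cr] .
  obtain S0 where S0: "minimal_icc n E e f S0" "S0 \<subseteq> C"
    using icc_has_minimal_subset[OF C(1)] by blast
  have "S = S0" if S: "minimal_icc n E e f S" for S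
  proof -
    \<comment> \<open>G[S] is an upper bound, so it contains z \<supseteq> G[C]; thus S0 \<subseteq> C \<subseteq> S.\<close>
    have "S \<in> icc n E e f" using S unfolding minimal_icc_def by blast
    then have "z \<subseteq> induced_edges E S"
      using least induced_edges_in_NC[OF g] edges_in_induced_edges_icc[OF \<open>e \<in> E\<close> \<open>f \<in> E\<close>]
      unfolding icc_def by blast
    moreover have "fst e \<in> C" "snd e \<in> C" "fst e \<noteq> snd e"
      using C(1) graph_onD[OF g, of "fst e" "snd e"] \<open>e \<in> E\<close> unfolding icc_def by auto
    ultimately have "C \<subseteq> S"
      using C subset_if_induced_edges_subset unfolding icc_def by blast
    then show "S = S0" using S S0 unfolding minimal_icc_def by blast
  qed
  then show ?thesis unfolding crossing_closed_pair_def using S0(1) by blast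
qed

lemma nontrivial_blocks_J:
  assumes g: "graph_on n E" and "e \<in> E" and cc: "crossing_closed_pair n E e f"
  shows "{C \<in> pi_part n (induced_edges E (J n E e f)). 2 \<le> card C} = {J n E e f}"
proof -
  let ?J = "J n E e f"
  have "?J \<in> icc n E e f" using minimal_icc_J[OF cc] unfolding minimal_icc_def by blast
  then have J: "induced_connected n E ?J" "{fst e, snd e} \<subseteq> ?J"
    unfolding icc_def by auto
  have "finite ?J" using J(1) finite_subset unfolding induced_connected_def by blast
  then have "card {fst e, snd e} \<le> card ?J" using J(2) by (rule card_mono)
  moreover have "fst e \<noteq> snd e" using graph_onD[OF g, of "fst e" "snd e"] \<open>e \<in> E\<close> by auto
  ultimately show ?thesis using nontrivial_blocks_induced_edges[OF J(1)] by simp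
qed

theorem theorem2p5:
  fixes n :: nat and E :: "(nat \<times> nat) set"
  assumes "graph_on n E"
  shows "(\<forall>e \<in> E. \<forall>f \<in> E. crosses e f \<longrightarrow>
            (crossing_closed_pair n E e f \<longleftrightarrow> (\<exists>z. is_join (NC n E) {e} {f} z)) \<and>
            (crossing_closed_pair n E e f \<longrightarrow>
               is_join (NC n E) {e} {f} (induced_edges E (J n E e f)) \<and>
               {C \<in> pi_part n (induced_edges E (J n E e f)). 2 \<le> card C} = {J n E e f}))
       \<and> (crossing_closed_graph n E \<longleftrightarrow>
            (\<forall>e \<in> E. \<forall>f \<in> E. crosses e f \<longrightarrow> (\<exists>z. is_join (NC n E) {e} {f} z)))"
proof -
  have closed_iff_join: "crossing_closed_pair n E e f \<longleftrightarrow> (\<exists>z. is_join (NC n E) {e} {f} z)"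
    if "e \<in> E" "f \<in> E" "crosses e f" for e f
    using join_induced_edges_J[OF assms that] crossing_closed_pair_if_join[OF assms that] by blast
  show ?thesis
    using join_induced_edges_J[OF assms] nontrivial_blocks_J[OF assms]
    by (simp add: closed_iff_join crossing_closed_graph_def)
qed

end
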